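(* Let $E$ be a Banach lattice, $u_0\in E^+$, $\delta>0$, and let $x_1^*,\dots,x_N^*\in (E^* )^+$ be mutually disjoint. Suppose $\langle u_0,x_n^*\rangle\ge\delta$ for all $1\le n\le N$ and that there exists $y^*\in(E^* )^+$ with $$\{x_n^*\}_{n=1}^N\subseteq [-y^*,y^*]+\tfrac12\delta B_{\rho_{u_0}} .$$ Then $N\le 2\langle u_0,y^*\rangle/\delta$.
   Context: For $u_0\in E$, $\rho_{u_0}$ is the Riesz seminorm on $E^*$ given by $\rho_{u_0}(x^* )=\langle |u_0|,|x^*|\rangle$, and $B_{\rho_{u_0}}=\{x^*\in E^*:\rho_{u_0}(x^* )\le 1\}$. $[-y^*,y^*]$ is the order interval in $E^*$. *)

theory Defs
  imports "HOL-Analysis.Analysis" "HOL-Library.Lattice_Algebras"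
begin

class banach_lattice = banach + ordered_real_vector + lattice_ab_group_add_abs +
  assumes norm_lattice: "\<bar>x\<bar> \<le> \<bar>y\<bar> \<Longrightarrow> norm x \<le> norm y"

text \<open>The dual E* is represented by the bounded linear functionals
  (type of bounded linear maps to real) with the usual (dual cone) order.\<close>

definition dual_le :: "('a::banach_lattice \<Rightarrow>\<^sub>L real) \<Rightarrow> ('a \<Rightarrow>\<^sub>L real) \<Rightarrow> bool" where
  "dual_le f g \<longleftrightarrow> (\<forall>x. 0 \<le> x \<longrightarrow> blinfun_apply f x \<le> blinfun_apply g x)"

definition dual_pos :: "('a::banach_lattice \<Rightarrow>\<^sub>L real) \<Rightarrow> bool" where
  "dual_pos f \<longleftrightarrow> dual_le 0 f"

definition dual_interval :: "('a::banach_lattice \<Rightarrow>\<^sub>L real) \<Rightarrow> ('a \<Rightarrow>\<^sub>L real) set" where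
  "dual_interval y = {z. dual_le (- y) z \<and> dual_le z y}"

text \<open>Value of the modulus |f| of f in E* at a positive element x
  (Riesz--Kantorovich formula): |f|(x) = sup { f(y) : |y| \<le> x }.\<close>
definition dual_abs_at :: "('a::banach_lattice \<Rightarrow>\<^sub>L real) \<Rightarrow> 'a \<Rightarrow> real" where
  "dual_abs_at f x = Sup {blinfun_apply f y | y. \<bar>y\<bar> \<le> x}"

text \<open>Disjointness in E*: |f| \<sqinter> |g| = 0, where for positive functionals
  (p \<sqinter> q)(x) = inf { p(y) + q(x - y) : 0 \<le> y \<le> x } for x \<ge> 0.\<close>
definition dual_disjoint :: "('a::banach_lattice \<Rightarrow>\<^sub>L real) \<Rightarrow> ('a \<Rightarrow>\<^sub>L real) \<Rightarrow> bool" where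
  "dual_disjoint f g \<longleftrightarrow>
     (\<forall>x. 0 \<le> x \<longrightarrow> Inf {dual_abs_at f y + dual_abs_at g (x - y) | y. 0 \<le> y \<and> y \<le> x} = 0)"

definition rho :: "'a::banach_lattice \<Rightarrow> ('a \<Rightarrow>\<^sub>L real) \<Rightarrow> real" where
  "rho u0 f = dual_abs_at f \<bar>u0\<bar>"

definition rho_ball :: "'a::banach_lattice \<Rightarrow> ('a \<Rightarrow>\<^sub>L real) set" where
  "rho_ball u0 = {f. rho u0 f \<le> 1}"

end

theory Submission
  imports Defs
begin

text \<open>On \<open>[0, u\<^sub>0]\<close> every \<open>x\<^sub>n\<close> is dominated by \<open>y + \<delta>/2\<close>. Disjointness of the \<open>x\<^sub>n\<close> lets one
  cut any \<open>0 \<le> r \<le> u\<^sub>0\<close> into pieces such that, up to \<open>\<epsilon>\<close>, each \<open>x\<^sub>n\<close> only sees its own piece;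
  summing the domination over the pieces gives \<open>\<Sum>\<^sub>n (x\<^sub>n(u\<^sub>0) - \<delta>/2) \<le> y(u\<^sub>0)\<close>, and each
  summand is at least \<open>\<delta>/2\<close>.\<close>

lemma dual_pos_mono:
  fixes f :: "'a::banach_lattice \<Rightarrow>\<^sub>L real"
  assumes "dual_pos f" "a \<le> b"
  shows "blinfun_apply f a \<le> blinfun_apply f b"
proof -
  have "0 \<le> blinfun_apply f (b - a)"
    using assms unfolding dual_pos_def dual_le_def by simp
  then show ?thesis by (simp add: blinfun.diff_right)
qed

lemma dual_pos_nonneg:
  fixes f :: "'a::banach_lattice \<Rightarrow>\<^sub>L real"
  assumes "dual_pos f" "0 \<le> a"
  shows "0 \<le> blinfun_apply f a"
  using dual_pos_mono[OF assms] by simp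

lemma dual_abs_at_pos:
  fixes f :: "'a::banach_lattice \<Rightarrow>\<^sub>L real"
  assumes "dual_pos f" "0 \<le> a"
  shows "dual_abs_at f a = blinfun_apply f a"
  unfolding dual_abs_at_def
proof (rule cSup_eq_maximum)
  show "blinfun_apply f a \<in> {blinfun_apply f y |y. \<bar>y\<bar> \<le> a}"
    using assms(2) by auto
next
  fix t assume "t \<in> {blinfun_apply f y |y. \<bar>y\<bar> \<le> a}"
  then obtain z where "t = blinfun_apply f z" "\<bar>z\<bar> \<le> a" by auto
  then show "t \<le> blinfun_apply f a"
    using dual_pos_mono[OF assms(1)] abs_ge_self[of z] order_trans by blast
qed

lemma le_dual_abs_at:
  fixes f :: "'a::banach_lattice \<Rightarrow>\<^sub>L real"
  assumes "\<bar>v\<bar> \<le> a"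
  shows "blinfun_apply f v \<le> dual_abs_at f a"
  unfolding dual_abs_at_def
proof (rule cSup_upper)
  show "blinfun_apply f v \<in> {blinfun_apply f y |y. \<bar>y\<bar> \<le> a}"
    using assms by auto
next
  show "bdd_above {blinfun_apply f y |y. \<bar>y\<bar> \<le> a}"
  proof (rule bdd_aboveI)
    fix s assume "s \<in> {blinfun_apply f y |y. \<bar>y\<bar> \<le> a}"
    then obtain t where t: "s = blinfun_apply f t" "\<bar>t\<bar> \<le> a" by auto
    have "\<bar>t\<bar> \<le> \<bar>a\<bar>"
      using t(2) abs_ge_self[of a] by (rule order_trans)
    then have "norm t \<le> norm a"
      by (rule norm_lattice)
    then have "norm f * norm t \<le> norm f * norm a"
      by (simp add: mult_left_mono)
    moreover have "s \<le> norm f * norm t"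
      using t(1) norm_blinfun[of f t] by simp
    ultimately show "s \<le> norm f * norm a" by linarith
  qed
qed

lemma apply_le_of_mem_dual_interval_plus_rho_ball:
  fixes u v :: "'a::banach_lattice"
  assumes "x \<in> {z + c *\<^sub>R w | z w. z \<in> dual_interval y \<and> w \<in> rho_ball u}"
    and "0 \<le> c" "0 \<le> v" "v \<le> \<bar>u\<bar>"
  shows "blinfun_apply x v \<le> blinfun_apply y v + c"
proof -
  obtain z w where x: "x = z + c *\<^sub>R w" and "z \<in> dual_interval y" "w \<in> rho_ball u"
    using assms(1) by blast
  then have "blinfun_apply z v \<le> blinfun_apply y v"
    using assms(3) unfolding dual_interval_def dual_le_def by blast
  moreover have "blinfun_apply w v \<le> 1"
    using le_dual_abs_at[of v "\<bar>u\<bar>" w] \<open>w \<in> rho_ball u\<close> assms(3,4)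
    unfolding rho_ball_def rho_def by simp
  then have "c * blinfun_apply w v \<le> c"
    using assms(2) mult_left_mono[of _ 1 c] by simp
  ultimately show ?thesis
    unfolding x by (simp add: blinfun.add_left blinfun.scaleR_left)
qed

lemma dual_disjoint_split:
  fixes f g :: "'a::banach_lattice \<Rightarrow>\<^sub>L real"
  assumes "dual_pos f" "dual_pos g" "dual_disjoint f g" "0 \<le> r" "0 < e"
  shows "\<exists>a. 0 \<le> a \<and> a \<le> r \<and> blinfun_apply f a + blinfun_apply g (r - a) < e"
proof -
  let ?S = "{dual_abs_at f a + dual_abs_at g (r - a) | a. 0 \<le> a \<and> a \<le> r}"
  have "dual_abs_at f 0 + dual_abs_at g (r - 0) \<in> ?S"
    using assms(4) by blast
  moreover have "Inf ?S < e"
    using assms(3-5) unfolding dual_disjoint_def by simp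
  ultimately obtain a where a: "0 \<le> a" "a \<le> r"
    and "dual_abs_at f a + dual_abs_at g (r - a) < e"
    using cInf_lessD[of ?S e] by blast
  moreover have "0 \<le> r - a"
    using a(2) by simp
  ultimately show ?thesis
    using dual_abs_at_pos[OF assms(1)] dual_abs_at_pos[OF assms(2)] by auto
qed

lemma sup_le_add_of_nonneg:
  fixes a b :: "'a::lattice_ab_group_add"
  assumes "0 \<le> a" "0 \<le> b"
  shows "sup a b \<le> a + b"
  using assms by (simp add: add_increasing add_increasing2)

lemma dual_disjoint_family_split:
  fixes f :: "'a::banach_lattice \<Rightarrow>\<^sub>L real" and g :: "'i \<Rightarrow> ('a \<Rightarrow>\<^sub>L real)"
  assumes "finite S" "dual_pos f" "\<forall>i\<in>S. dual_pos (g i) \<and> dual_disjoint f (g i)"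
    and "0 \<le> r" "0 < e"
  shows "\<exists>a. 0 \<le> a \<and> a \<le> r \<and> blinfun_apply f a + (\<Sum>i\<in>S. blinfun_apply (g i) (r - a)) \<le> e"
  using assms(1,3,5)
proof (induction S arbitrary: e rule: finite_induct)
  case empty
  then show ?case
    using assms(4) by (intro exI[of _ 0]) simp
next
  case (insert j S)
  then obtain a1 where a1: "0 \<le> a1" "a1 \<le> r"
    and small1: "blinfun_apply f a1 + (\<Sum>i\<in>S. blinfun_apply (g i) (r - a1)) \<le> e / 2"
    by (metis insert_iff half_gt_zero)
  have "dual_pos (g j)" "dual_disjoint f (g j)"
    using insert.prems(1) by auto
  then obtain a2 where a2: "0 \<le> a2" "a2 \<le> r"
    and small2: "blinfun_apply f a2 + blinfun_apply (g j) (r - a2) < e / 2"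
    using dual_disjoint_split[OF assms(2) _ _ assms(4)] insert.prems(2) by (metis half_gt_zero)
  define a where "a = sup a1 a2"
  have "0 \<le> a" "a \<le> r" "r - a \<le> r - a1" "r - a \<le> r - a2"
    unfolding a_def using a1 a2 le_supI1 by (auto intro: diff_left_mono)
  have "blinfun_apply f a \<le> blinfun_apply f a1 + blinfun_apply f a2"
    using dual_pos_mono[OF assms(2) sup_le_add_of_nonneg[OF a1(1) a2(1)]]
    unfolding a_def by (simp add: blinfun.add_right)
  moreover have "(\<Sum>i\<in>S. blinfun_apply (g i) (r - a)) \<le> (\<Sum>i\<in>S. blinfun_apply (g i) (r - a1))"
    using insert.prems(1) \<open>r - a \<le> r - a1\<close> by (intro sum_mono dual_pos_mono) auto
  moreover have "blinfun_apply (g j) (r - a) \<le> blinfun_apply (g j) (r - a2)"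
    using dual_pos_mono[OF \<open>dual_pos (g j)\<close> \<open>r - a \<le> r - a2\<close>] .
  ultimately have "blinfun_apply f a + (\<Sum>i\<in>insert j S. blinfun_apply (g i) (r - a)) \<le> e"
    using small1 small2 insert.hyps by simp
  then show ?case
    using \<open>0 \<le> a\<close> \<open>a \<le> r\<close> by blast
qed

lemma sum_dual_disjoint_le:
  fixes x :: "'i \<Rightarrow> ('a::banach_lattice \<Rightarrow>\<^sub>L real)"
  assumes "finite S"
    and "\<forall>n\<in>S. dual_pos (x n)"
    and "\<forall>n\<in>S. \<forall>m\<in>S. n \<noteq> m \<longrightarrow> dual_disjoint (x n) (x m)"
    and "dual_pos y"
    and "\<forall>n\<in>S. \<forall>v. 0 \<le> v \<longrightarrow> v \<le> u \<longrightarrow> blinfun_apply (x n) v \<le> blinfun_apply y v + c"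
    and "0 \<le> r" "r \<le> u"
  shows "(\<Sum>n\<in>S. blinfun_apply (x n) r - c) \<le> blinfun_apply y r"
  using assms(1-3,5-7)
proof (induction S arbitrary: r rule: finite_induct)
  case empty
  then show ?case
    using dual_pos_nonneg[OF assms(4)] by simp
next
  case (insert n S)
  show ?case
  proof (rule field_le_epsilon)
    fix e :: real assume "0 < e"
    have "dual_pos (x n)" "\<forall>m\<in>S. dual_pos (x m) \<and> dual_disjoint (x n) (x m)"
      using insert.hyps(2) insert.prems(1,2) by auto
    \<comment> \<open>\<open>x n\<close> is charged on \<open>r - a\<close>, the other \<open>x m\<close> on \<open>a\<close>; the cross terms are below \<open>e\<close>.\<close>
    then obtain a where a: "0 \<le> a" "a \<le> r"
      and small: "blinfun_apply (x n) a + (\<Sum>m\<in>S. blinfun_apply (x m) (r - a)) \<le> e"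
      using dual_disjoint_family_split[OF insert.hyps(1)] insert.prems(4) \<open>0 < e\<close> by blast
    have "(\<Sum>m\<in>S. blinfun_apply (x m) a - c) \<le> blinfun_apply y a"
      using insert.IH insert.prems a order_trans[OF a(2)] by simp
    moreover have "blinfun_apply (x n) (r - a) \<le> blinfun_apply y (r - a) + c"
      using insert.prems(3,5) a by (simp add: order_trans[of _ r])
    ultimately show "(\<Sum>m\<in>insert n S. blinfun_apply (x m) r - c) \<le> blinfun_apply y r + e"
      using small insert.hyps
      by (simp add: sum.distrib sum_subtractf blinfun.diff_right algebra_simps)
  qed
qed

theorem lemma3p4:
  fixes u0 :: "'a::banach_lattice" and \<delta> :: real and N :: nat
    and x :: "nat \<Rightarrow> ('a \<Rightarrow>\<^sub>L real)" and y :: "'a \<Rightarrow>\<^sub>L real"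
  assumes "0 \<le> u0"
    and "\<delta> > 0"
    and "\<forall>n\<in>{1..N}. dual_pos (x n)"
    and "\<forall>n\<in>{1..N}. \<forall>m\<in>{1..N}. n \<noteq> m \<longrightarrow> dual_disjoint (x n) (x m)"
    and "\<forall>n\<in>{1..N}. blinfun_apply (x n) u0 \<ge> \<delta>"
    and "dual_pos y"
    and "x ` {1..N} \<subseteq> {z + (\<delta> / 2) *\<^sub>R w | z w. z \<in> dual_interval y \<and> w \<in> rho_ball u0}"
  shows "real N \<le> 2 * blinfun_apply y u0 / \<delta>"
proof -
  have "\<forall>n\<in>{1..N}. \<forall>v. 0 \<le> v \<longrightarrow> v \<le> u0 \<longrightarrow> blinfun_apply (x n) v \<le> blinfun_apply y v + \<delta> / 2"
    using apply_le_of_mem_dual_interval_plus_rho_ball assms(1,2,7) by fastforce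
  then have "(\<Sum>n\<in>{1..N}. blinfun_apply (x n) u0 - \<delta> / 2) \<le> blinfun_apply y u0"
    using sum_dual_disjoint_le[of "{1..N}" x] assms(1,3,4,6) by blast
  moreover have "(\<Sum>n\<in>{1..N}. \<delta> / 2) \<le> (\<Sum>n\<in>{1..N}. blinfun_apply (x n) u0 - \<delta> / 2)"
    using assms(5) by (intro sum_mono) auto
  ultimately have "real N * (\<delta> / 2) \<le> blinfun_apply y u0"
    by simp
  then show ?thesis
    using assms(2) by (simp add: field_simps)
qed

end
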